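(* Let $W_{4,n}$ be the $4$-regular Kn\"odel graph. If $n\in\{16,18,28,36\}$, then $W_{4,n}$ is $\gamma$-stable.
   Context: For an even integer $n\ge 2$ and $1\le\Delta\le\lfloor\log_2 n\rfloor$, the Kn\"odel graph $W_{\Delta,n}$ is the $\Delta$-regular bipartite graph on the $n$ vertices $(i,j)$, $i\in\{1,2\}$, $0\le j\le n/2-1$, in which for every $j$ the vertex $(1,j)$ is adjacent to the vertices $(2,(j+2^k-1)\bmod (n/2))$ for $k=0,1,\dots,\Delta-1$ (and there are no other edges). A set $D$ of vertices of a graph $G$ is dominating if every vertex not in $D$ is adjacent to a vertex of $D$; $\gamma(G)$ is the minimum size of a dominating set. A graph $G$ is $\gamma$-stable if $\gamma(G-u)=\gamma(G)$ for every vertex $u$ of $G$, where $G-u$ is the graph obtained by deleting $u$. *)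

theory Defs
  imports Main
begin

text \<open>Graphs are given by a finite vertex set V and a symmetric adjacency
relation adj; the graph G - u is (V - {u}, adj) (adjacency restricted to the
remaining vertices).\<close>

definition knodel_vertices :: "nat \<Rightarrow> (nat \<times> nat) set" where
  "knodel_vertices n = {1,2} \<times> {0..<n div 2}"

definition knodel_adj :: "nat \<Rightarrow> nat \<Rightarrow> (nat \<times> nat) \<Rightarrow> (nat \<times> nat) \<Rightarrow> bool" where
  "knodel_adj \<Delta> n x y \<longleftrightarrow>
     x \<in> knodel_vertices n \<and> y \<in> knodel_vertices n \<and>
     ((fst x = 1 \<and> fst y = 2 \<and> (\<exists>k<\<Delta>. snd y = (snd x + 2^k - 1) mod (n div 2))) \<or>
      (fst y = 1 \<and> fst x = 2 \<and> (\<exists>k<\<Delta>. snd x = (snd y + 2^k - 1) mod (n div 2))))"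

definition dominating :: "'a set \<Rightarrow> ('a \<Rightarrow> 'a \<Rightarrow> bool) \<Rightarrow> 'a set \<Rightarrow> bool" where
  "dominating V adj D \<longleftrightarrow> D \<subseteq> V \<and> (\<forall>v\<in>V - D. \<exists>d\<in>D. adj v d)"

definition domination_number :: "'a set \<Rightarrow> ('a \<Rightarrow> 'a \<Rightarrow> bool) \<Rightarrow> nat" where
  "domination_number V adj = Min (card ` {D. dominating V adj D})"

definition gamma_stable :: "'a set \<Rightarrow> ('a \<Rightarrow> 'a \<Rightarrow> bool) \<Rightarrow> bool" where
  "gamma_stable V adj \<longleftrightarrow>
     (\<forall>u\<in>V. domination_number (V - {u}) adj = domination_number V adj)"

end

theory Submission
  imports Defs "HOL-Number_Theory.Cong"
begin

(* Rotating the second coordinate is an automorphism of W_{\<Delta>,n} acting transitively on each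
side, so it suffices to delete (1,0) and (2,0). A set is dominating iff it meets every closed
neighbourhood, and in a \<Delta>-regular graph each vertex lies in \<Delta>+1 closed neighbourhoods. For
n = 16, 18, 28, 36 one dominating set of W_{4,n} with g = 4, 4, 7, 8 vertices, avoiding (1,0) and
(2,0), bounds \<gamma>(W) and both \<gamma>(W - u) by g. Conversely, a branch-and-bound search shows that
no g - 1 vertices meet all closed neighbourhoods of W, W - (1,0) or W - (2,0): branch on the
vertex meeting the first closed neighbourhood, and cut as soon as more than 5k neighbourhoods
remain to be met by k vertices. *)

lemma finite_dominating_sets: "finite V \<Longrightarrow> finite {D. dominating V adj D}"
  by (rule finite_subset[of _ "Pow V"]) (auto simp: dominating_def)

lemma domination_number_le:
  assumes "finite V" "dominating V adj D"
  shows "domination_number V adj \<le> card D"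
  unfolding domination_number_def
  using assms finite_dominating_sets[OF assms(1)] by (simp add: Min_le)

lemma domination_number_attained:
  assumes "finite V"
  obtains D where "dominating V adj D" "card D = domination_number V adj"
proof -
  have "dominating V adj V" by (simp add: dominating_def)
  then have "domination_number V adj \<in> card ` {D. dominating V adj D}"
    unfolding domination_number_def using finite_dominating_sets[OF assms]
    by (intro Min_in) auto
  then obtain D where "dominating V adj D" "card D = domination_number V adj" by auto
  then show ?thesis by (rule that)
qed

lemma dominating_image:
  assumes "bij_betw f V W"
    and "\<And>x y. x \<in> V \<Longrightarrow> y \<in> V \<Longrightarrow> adj' (f x) (f y) \<longleftrightarrow> adj x y"
    and "dominating V adj D"
  shows "dominating W adj' (f ` D)"
  unfolding dominating_def
proof (intro conjI ballI)
  have D: "D \<subseteq> V" using assms(3) by (simp add: dominating_def)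
  then show "f ` D \<subseteq> W" using assms(1) by (auto simp: bij_betw_def)
  fix w assume w: "w \<in> W - f ` D"
  then obtain v where v: "v \<in> V" "w = f v" using assms(1) by (auto simp: bij_betw_def)
  then have "v \<in> V - D" using w by blast
  then obtain d where "d \<in> D" "adj v d" using assms(3) by (auto simp: dominating_def)
  then show "\<exists>d\<in>f ` D. adj' w d" using assms(2) v D by blast
qed

lemma card_dominating_sets_subset:
  assumes f: "bij_betw f V W"
    and adj: "\<And>x y. x \<in> V \<Longrightarrow> y \<in> V \<Longrightarrow> adj' (f x) (f y) \<longleftrightarrow> adj x y"
  shows "card ` {D. dominating V adj D} \<subseteq> card ` {D. dominating W adj' D}"
proof
  fix c assume "c \<in> card ` {D. dominating V adj D}"
  then obtain D where D: "dominating V adj D" and c: "c = card D" by blast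
  have "inj_on f D"
    using D f by (meson bij_betw_imp_inj_on dominating_def inj_on_subset)
  then have "c = card (f ` D)" using c by (simp add: card_image)
  then show "c \<in> card ` {D. dominating W adj' D}"
    using dominating_image[OF f adj D] by blast
qed

lemma domination_number_bij_betw:
  assumes f: "bij_betw f V W"
    and adj: "\<And>x y. x \<in> V \<Longrightarrow> y \<in> V \<Longrightarrow> adj' (f x) (f y) \<longleftrightarrow> adj x y"
  shows "domination_number W adj' = domination_number V adj"
proof -
  let ?g = "inv_into V f"
  have g: "bij_betw ?g W V" using f by (rule bij_betw_inv_into)
  have "adj (?g x) (?g y) \<longleftrightarrow> adj' x y" if "x \<in> W" "y \<in> W" for x y
  proof -
    have "?g x \<in> V" "?g y \<in> V" using g that by (simp_all add: bij_betw_apply)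
    moreover have "f (?g x) = x" "f (?g y) = y"
      using f that by (simp_all add: bij_betw_inv_into_right)
    ultimately show ?thesis using adj by metis
  qed
  then have "card ` {D. dominating W adj' D} \<subseteq> card ` {D. dominating V adj D}"
    using card_dominating_sets_subset[OF g] by blast
  moreover have "card ` {D. dominating V adj D} \<subseteq> card ` {D. dominating W adj' D}"
    using f adj by (rule card_dominating_sets_subset)
  ultimately show ?thesis unfolding domination_number_def by (metis subset_antisym)
qed

lemma dominating_iff_meets_closed_nbhds:
  assumes "\<And>v s. v \<in> V \<Longrightarrow> s \<in> V \<Longrightarrow> s \<in> N v \<longleftrightarrow> s = v \<or> adj v s"
  shows "dominating V adj D \<longleftrightarrow> D \<subseteq> V \<and> (\<forall>v\<in>V. N v \<inter> D \<noteq> {})"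
  using assms unfolding dominating_def by blast

lemma dominating_Diff_singleton: "dominating V adj D \<Longrightarrow> u \<notin> D \<Longrightarrow> dominating (V - {u}) adj D"
  unfolding dominating_def by blast

fun no_hitting_set :: "nat \<Rightarrow> nat \<Rightarrow> 'a list list \<Rightarrow> bool" where
  "no_hitting_set B k [] = False"
| "no_hitting_set B 0 (M # Ms) = True"
| "no_hitting_set B (Suc k) (M # Ms) =
     (if B * Suc k < length (M # Ms) then True
      else list_all (\<lambda>s. no_hitting_set B k (filter (\<lambda>M'. s \<notin> set M') (M # Ms))) M)"

lemma length_le_sum_hits:
  assumes "finite S" "\<forall>M\<in>set Ms. set M \<inter> S \<noteq> {}"
  shows "length Ms \<le> (\<Sum>s\<in>S. length (filter (\<lambda>M. s \<in> set M) Ms))"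
  using assms(2)
proof (induction Ms)
  case Nil
  then show ?case by simp
next
  case (Cons M Ms)
  have "1 \<le> card (set M \<inter> S)"
    using Cons.prems assms(1) by (simp add: Suc_leI card_gt_0_iff)
  also have "\<dots> = (\<Sum>s\<in>S. if s \<in> set M then 1 else 0)"
    using assms(1) by (simp add: sum.If_cases Int_commute)
  moreover have "(\<Sum>s\<in>S. length (filter (\<lambda>M'. s \<in> set M') (M # Ms))) =
      (\<Sum>s\<in>S. if s \<in> set M then 1 else 0) + (\<Sum>s\<in>S. length (filter (\<lambda>M'. s \<in> set M') Ms))"
    by (auto simp: sum.distrib[symmetric] intro: sum.cong)
  ultimately show ?case using Cons by simp
qed

lemma no_hitting_set_sound:
  assumes "no_hitting_set B k Ms" "finite S" "card S \<le> k"
    and "\<forall>s\<in>S. length (filter (\<lambda>M. s \<in> set M) Ms) \<le> B"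
  shows "\<exists>M\<in>set Ms. set M \<inter> S = {}"
  using assms
proof (induction B k Ms arbitrary: S rule: no_hitting_set.induct)
  case (1 B k)
  then show ?case by simp
next
  case (2 B M Ms)
  then show ?case by auto
next
  case (3 B k M Ms)
  show ?case
  proof (rule ccontr)
    assume "\<not> ?thesis"
    then have hit: "\<forall>M'\<in>set (M # Ms). set M' \<inter> S \<noteq> {}" by blast
    show False
    proof (cases "B * Suc k < length (M # Ms)")
      case True
      have "length (M # Ms) \<le> (\<Sum>s\<in>S. length (filter (\<lambda>M'. s \<in> set M') (M # Ms)))"
        using length_le_sum_hits[OF "3.prems"(2) hit] .
      also have "\<dots> \<le> card S * B" using "3.prems"(4) sum_bounded_above by fastforce
      also have "\<dots> \<le> B * Suc k" using "3.prems"(3) by (metis mult.commute mult_le_mono1)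
      finally show False using True by simp
    next
      case False
      obtain s where s: "s \<in> set M" "s \<in> S" using hit by auto
      let ?Ms' = "filter (\<lambda>M'. s \<notin> set M') (M # Ms)"
      have "no_hitting_set B k ?Ms'"
        using "3.prems"(1) False s(1) by (simp add: list_all_iff)
      moreover have "length (filter (\<lambda>M'. s' \<in> set M') ?Ms') \<le> B" if "s' \<in> S" for s'
      proof -
        have "filter (\<lambda>M'. s' \<in> set M') ?Ms' =
            filter (\<lambda>M'. s \<notin> set M') (filter (\<lambda>M'. s' \<in> set M') (M # Ms))"
          by (simp add: filter_filter conj_commute)
        then show ?thesis using "3.prems"(4) that by (metis length_filter_le order_trans)
      qed
      ultimately obtain M' where "M' \<in> set ?Ms'" "set M' \<inter> (S - {s}) = {}"
        using "3.IH"[OF False s(1), of "S - {s}"] "3.prems"(2,3) s(2) by force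
      then have "M' \<in> set (M # Ms)" "set M' \<inter> S = {}" unfolding set_filter by blast+
      then show False using hit by blast
    qed
  qed
qed

lemma domination_number_gt_if_no_hitting_set:
  assumes vs: "set vs = V" "distinct vs"
    and N: "\<And>v s. v \<in> V \<Longrightarrow> s \<in> V \<Longrightarrow> s \<in> set (N v) \<longleftrightarrow> s = v \<or> adj v s"
    and sym: "\<And>v s. adj v s \<Longrightarrow> adj s v"
    and bounded: "\<And>v. v \<in> V \<Longrightarrow> length (N v) \<le> B"
    and search: "no_hitting_set B k (map N vs)"
  shows "k < domination_number V adj"
proof (rule ccontr)
  assume "\<not> k < domination_number V adj"
  obtain D where D: "dominating V adj D" "card D = domination_number V adj"
    using vs(1) domination_number_attained by blast
  have DV: "D \<subseteq> V" using D(1) by (simp add: dominating_def)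
  have load: "\<forall>s\<in>D. length (filter (\<lambda>M. s \<in> set M) (map N vs)) \<le> B"
  proof
    fix s assume "s \<in> D"
    then have s: "s \<in> V" using DV by blast
    have "length (filter (\<lambda>M. s \<in> set M) (map N vs)) = card {v \<in> V. s \<in> set (N v)}"
      using vs by (simp add: filter_map distinct_length_filter Collect_conj_eq Int_commute)
    also have "\<dots> \<le> card (set (N s))"
      using N sym s by (intro card_mono) auto
    also have "\<dots> \<le> B" using card_length bounded[OF s] order_trans by blast
    finally show "length (filter (\<lambda>M. s \<in> set M) (map N vs)) \<le> B" .
  qed
  have "finite D" using DV vs(1) finite_subset by blast
  moreover have "card D \<le> k" using D(2) \<open>\<not> k < domination_number V adj\<close> by simp
  ultimately obtain M where "M \<in> set (map N vs)" "set M \<inter> D = {}"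
    using no_hitting_set_sound[OF search _ _ load] by blast
  moreover have "\<forall>v\<in>V. set (N v) \<inter> D \<noteq> {}"
    using D(1) N by (subst (asm) dominating_iff_meets_closed_nbhds[where N = "\<lambda>v. set (N v)"]) auto
  ultimately show False using vs(1) by auto
qed

(* The closed neighbourhood of v in W_{\<Delta>,n} - U; on side 2 the index (j - (2^k - 1)) mod (n div 2)
is written with n div 2 added first, to avoid truncated subtraction. *)
definition knodel_closed_nbhd ::
    "nat \<Rightarrow> nat \<Rightarrow> (nat \<times> nat) set \<Rightarrow> nat \<times> nat \<Rightarrow> (nat \<times> nat) list" where
  "knodel_closed_nbhd \<Delta> n U v = filter (\<lambda>w. w \<notin> U)
     (v # map (\<lambda>k. if fst v = 1 then (2, (snd v + (2 ^ k - 1)) mod (n div 2))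
                    else (1, (snd v + n div 2 - (2 ^ k - 1)) mod (n div 2))) [0..<\<Delta>])"

definition knodel_vertex_list :: "nat \<Rightarrow> (nat \<times> nat) set \<Rightarrow> (nat \<times> nat) list" where
  "knodel_vertex_list n U = filter (\<lambda>v. v \<notin> U) (List.product [1, 2] [0..<n div 2])"

lemma knodel_adj_sym: "knodel_adj \<Delta> n x y \<longleftrightarrow> knodel_adj \<Delta> n y x"
  unfolding knodel_adj_def by auto

lemma set_knodel_vertex_list: "set (knodel_vertex_list n U) = knodel_vertices n - U"
  by (auto simp: knodel_vertex_list_def knodel_vertices_def)

lemma distinct_knodel_vertex_list: "distinct (knodel_vertex_list n U)"
  unfolding knodel_vertex_list_def by (intro distinct_filter distinct_product) simp_all

lemma length_knodel_closed_nbhd: "length (knodel_closed_nbhd \<Delta> n U v) \<le> Suc \<Delta>"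
  unfolding knodel_closed_nbhd_def by (rule order_trans[OF length_filter_le]) simp

lemma mod_add_eq_iff_mod_sub:
  fixes a b t m :: nat
  assumes "a < m" "b < m" "t \<le> m"
  shows "b = (a + t) mod m \<longleftrightarrow> a = (b + m - t) mod m"
proof -
  have "((a + t) mod m + (m - t)) mod m = (a + t + (m - t)) mod m"
    by (simp only: mod_add_left_eq)
  also have "\<dots> = a" using assms by simp
  finally have "((a + t) mod m + m - t) mod m = a" using assms(3) by simp
  moreover have "((b + (m - t)) mod m + t) mod m = (b + (m - t) + t) mod m"
    by (simp only: mod_add_left_eq)
  then have "((b + m - t) mod m + t) mod m = b" using assms by simp
  ultimately show ?thesis by metis
qed

lemma mem_knodel_closed_nbhd:
  assumes "2 ^ \<Delta> \<le> n" and v: "v \<in> knodel_vertices n - U" and s: "s \<in> knodel_vertices n - U"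
  shows "s \<in> set (knodel_closed_nbhd \<Delta> n U v) \<longleftrightarrow> s = v \<or> knodel_adj \<Delta> n v s"
proof -
  let ?m = "n div 2"
  obtain i j i' j' where ij: "v = (i, j)" "s = (i', j')" by fastforce
  have range: "i \<in> {1, 2}" "i' \<in> {1, 2}" "j < ?m" "j' < ?m"
    using v s ij by (auto simp: knodel_vertices_def)
  have offset: "2 ^ k - 1 \<le> ?m" if "k < \<Delta>" for k
  proof -
    have "2 ^ Suc k \<le> n"
      using assms(1) that by (meson Suc_leI order_trans one_le_numeral power_increasing)
    then show ?thesis by simp
  qed
  have nbhd: "s \<in> set (knodel_closed_nbhd \<Delta> n U v) \<longleftrightarrow>
      s \<in> insert v ((\<lambda>k. if i = 1 then (2, (j + (2 ^ k - 1)) mod ?m)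
                          else (1, (j + ?m - (2 ^ k - 1)) mod ?m)) ` {0..<\<Delta>})"
    using s by (auto simp: knodel_closed_nbhd_def ij)
  have adj: "knodel_adj \<Delta> n v s \<longleftrightarrow> (i = 1 \<and> i' = 2 \<and> (\<exists>k<\<Delta>. j' = (j + (2 ^ k - 1)) mod ?m))
      \<or> (i = 2 \<and> i' = 1 \<and> (\<exists>k<\<Delta>. j = (j' + (2 ^ k - 1)) mod ?m))"
    using v s unfolding knodel_adj_def ij by auto
  show ?thesis
  proof (cases "i = 1")
    case True
    then show ?thesis unfolding nbhd adj using ij by auto
  next
    case False
    then have i: "i = 2" using range by simp
    have inv: "j = (j' + (2 ^ k - 1)) mod ?m \<longleftrightarrow> j' = (j + ?m - (2 ^ k - 1)) mod ?m"
      if "k < \<Delta>" for k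
      using mod_add_eq_iff_mod_sub[OF range(4,3) offset[OF that]] .
    have "s \<in> set (knodel_closed_nbhd \<Delta> n U v) \<longleftrightarrow>
        s = v \<or> (i' = 1 \<and> (\<exists>k<\<Delta>. j' = (j + ?m - (2 ^ k - 1)) mod ?m))"
      unfolding nbhd using i ij by auto
    also have "\<dots> \<longleftrightarrow> s = v \<or> (i' = 1 \<and> (\<exists>k<\<Delta>. j = (j' + (2 ^ k - 1)) mod ?m))"
      using inv by blast
    also have "\<dots> \<longleftrightarrow> s = v \<or> knodel_adj \<Delta> n v s"
      unfolding adj using i by simp
    finally show ?thesis .
  qed
qed

definition knodel_rotate :: "nat \<Rightarrow> nat \<Rightarrow> nat \<times> nat \<Rightarrow> nat \<times> nat" where
  "knodel_rotate n c v = (fst v, (snd v + c) mod (n div 2))"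

lemma mod_add_rotate_eq_iff:
  fixes a b c t m :: nat
  assumes "b < m"
  shows "(b + c) mod m = ((a + c) mod m + t) mod m \<longleftrightarrow> b = (a + t) mod m"
proof -
  have "((a + c) mod m + t) mod m = (a + c + t) mod m" by (simp only: mod_add_left_eq)
  also have "a + c + t = a + t + c" by simp
  finally show ?thesis using assms cong_add_rcancel_nat[of b c "a + t" m] by (simp add: cong_def)
qed

lemma knodel_adj_rotate:
  assumes x: "x \<in> knodel_vertices n" and y: "y \<in> knodel_vertices n"
  shows "knodel_adj \<Delta> n (knodel_rotate n c x) (knodel_rotate n c y) \<longleftrightarrow> knodel_adj \<Delta> n x y"
proof -
  let ?m = "n div 2"
  have mem: "knodel_rotate n c x \<in> knodel_vertices n" "knodel_rotate n c y \<in> knodel_vertices n"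
    using x y by (auto simp: knodel_vertices_def knodel_rotate_def)
  have "snd x < ?m" "snd y < ?m" using x y by (auto simp: knodel_vertices_def)
  then have "(snd y + c) mod ?m = ((snd x + c) mod ?m + t) mod ?m \<longleftrightarrow> snd y = (snd x + t) mod ?m"
    and "(snd x + c) mod ?m = ((snd y + c) mod ?m + t) mod ?m \<longleftrightarrow> snd x = (snd y + t) mod ?m" for t
    by (simp_all add: mod_add_rotate_eq_iff)
  moreover have "j + 2 ^ k - 1 = j + (2 ^ k - 1)" for j k :: nat by simp
  ultimately show ?thesis
    using mem x y unfolding knodel_adj_def knodel_rotate_def fst_conv snd_conv by presburger
qed

lemma bij_betw_knodel_rotate: "bij_betw (knodel_rotate n c) (knodel_vertices n) (knodel_vertices n)"
proof -
  have "inj_on (knodel_rotate n c) (knodel_vertices n)"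
  proof
    fix x y assume xy: "x \<in> knodel_vertices n" "y \<in> knodel_vertices n"
      and "knodel_rotate n c x = knodel_rotate n c y"
    then have "fst x = fst y" "(snd x + c) mod (n div 2) = (snd y + c) mod (n div 2)"
      by (auto simp: knodel_rotate_def)
    then have "fst x = fst y" "[snd x = snd y] (mod n div 2)"
      using cong_add_rcancel_nat[of "snd x" c "snd y" "n div 2"] by (simp_all add: cong_def)
    moreover have "snd x < n div 2" "snd y < n div 2" using xy by (auto simp: knodel_vertices_def)
    ultimately show "x = y" by (simp add: cong_def prod_eq_iff)
  qed
  moreover have "knodel_rotate n c ` knodel_vertices n \<subseteq> knodel_vertices n"
    by (auto simp: knodel_vertices_def knodel_rotate_def)
  ultimately show ?thesis
    by (simp add: bij_betw_def endo_inj_surj knodel_vertices_def)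
qed

lemma knodel_gamma_stableI:
  assumes "domination_number (knodel_vertices n - {(1, 0)}) (knodel_adj \<Delta> n) =
      domination_number (knodel_vertices n) (knodel_adj \<Delta> n)"
    and "domination_number (knodel_vertices n - {(2, 0)}) (knodel_adj \<Delta> n) =
      domination_number (knodel_vertices n) (knodel_adj \<Delta> n)"
  shows "gamma_stable (knodel_vertices n) (knodel_adj \<Delta> n)"
  unfolding gamma_stable_def
proof
  fix u assume u: "u \<in> knodel_vertices n"
  obtain i j where ij: "u = (i, j)" "i \<in> {1, 2}" "j < n div 2"
    using u by (auto simp: knodel_vertices_def)
  let ?r = "knodel_rotate n (n div 2 - j)"
  have "?r u = (i, 0)" using ij by (simp add: knodel_rotate_def)
  then have "bij_betw ?r (knodel_vertices n - {u}) (knodel_vertices n - {(i, 0)})"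
    using bij_betw_knodel_rotate u
    by (metis bij_betw_DiffI bij_betw_singletonI empty_subsetI insert_subset bij_betw_apply)
  then have "domination_number (knodel_vertices n - {(i, 0)}) (knodel_adj \<Delta> n) =
      domination_number (knodel_vertices n - {u}) (knodel_adj \<Delta> n)"
    by (rule domination_number_bij_betw) (simp add: knodel_adj_rotate)
  then show "domination_number (knodel_vertices n - {u}) (knodel_adj \<Delta> n) =
      domination_number (knodel_vertices n) (knodel_adj \<Delta> n)"
    using assms ij(2) by auto
qed

lemma knodel_gamma_stable_by_search:
  assumes "2 ^ \<Delta> \<le> n"
    and "\<forall>U\<in>{{}, {(1, 0)}, {(2, 0)}}.
      no_hitting_set (Suc \<Delta>) k (map (knodel_closed_nbhd \<Delta> n U) (knodel_vertex_list n U))"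
    and "set D \<subseteq> set (knodel_vertex_list n {(1, 0), (2, 0)})"
    and "\<forall>M\<in>set (map (knodel_closed_nbhd \<Delta> n {}) (knodel_vertex_list n {})).
      set M \<inter> set D \<noteq> {}"
    and "length D = Suc k"
  shows "gamma_stable (knodel_vertices n) (knodel_adj \<Delta> n)"
proof -
  let ?V = "knodel_vertices n" and ?adj = "knodel_adj \<Delta> n"
  have lower: "k < domination_number (?V - U) ?adj" if "U \<in> {{}, {(1, 0)}, {(2, 0)}}" for U
  proof (rule domination_number_gt_if_no_hitting_set)
    show "no_hitting_set (Suc \<Delta>) k (map (knodel_closed_nbhd \<Delta> n U) (knodel_vertex_list n U))"
      using assms(2) that by blast
    show "set (knodel_vertex_list n U) = ?V - U" by (rule set_knodel_vertex_list)
    show "distinct (knodel_vertex_list n U)" by (rule distinct_knodel_vertex_list)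
    show "s \<in> set (knodel_closed_nbhd \<Delta> n U v) \<longleftrightarrow> s = v \<or> ?adj v s"
      if "v \<in> ?V - U" "s \<in> ?V - U" for v s
      using assms(1) that by (rule mem_knodel_closed_nbhd)
    show "?adj s v" if "?adj v s" for v s using that knodel_adj_sym by blast
    show "length (knodel_closed_nbhd \<Delta> n U v) \<le> Suc \<Delta>" for v
      by (rule length_knodel_closed_nbhd)
  qed
  have D: "set D \<subseteq> ?V" "(1, 0) \<notin> set D" "(2, 0) \<notin> set D"
    using assms(3) by (auto simp: set_knodel_vertex_list)
  have "dominating ?V ?adj (set D)"
  proof (subst dominating_iff_meets_closed_nbhds)
    show "s \<in> set (knodel_closed_nbhd \<Delta> n {} v) \<longleftrightarrow> s = v \<or> ?adj v s"
      if "v \<in> ?V" "s \<in> ?V" for v s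
      using mem_knodel_closed_nbhd[OF assms(1), of v "{}" s] that by simp
    show "set D \<subseteq> ?V \<and> (\<forall>v\<in>?V. set (knodel_closed_nbhd \<Delta> n {} v) \<inter> set D \<noteq> {})"
      using D(1) assms(4) set_knodel_vertex_list[of n "{}"] by auto
  qed
  then have "dominating (?V - U) ?adj (set D)" if "U \<in> {{}, {(1, 0)}, {(2, 0)}}" for U
    using that D by (auto intro: dominating_Diff_singleton)
  then have "domination_number (?V - U) ?adj = Suc k" if "U \<in> {{}, {(1, 0)}, {(2, 0)}}" for U
    using lower[OF that] domination_number_le[of "?V - U" ?adj "set D"] card_length[of D]
      assms(5) that
    by (force simp: knodel_vertices_def)
  from this[of "{}"] this[of "{(1, 0)}"] this[of "{(2, 0)}"] show ?thesis
    by (intro knodel_gamma_stableI) simp_all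
qed

theorem lemma4p3:
  assumes "n \<in> {16, 18, 28, 36}"
  shows "gamma_stable (knodel_vertices n) (knodel_adj 4 n)"
proof -
  have "gamma_stable (knodel_vertices 16) (knodel_adj 4 16)"
    by (rule knodel_gamma_stable_by_search[where k = 3 and D = "[(1, 1), (1, 2), (2, 6), (2, 7)]"])
      code_simp+
  moreover have "gamma_stable (knodel_vertices 18) (knodel_adj 4 18)"
    by (rule knodel_gamma_stable_by_search[where k = 3 and D = "[(1, 1), (1, 2), (2, 6), (2, 7)]"])
      code_simp+
  moreover have "gamma_stable (knodel_vertices 28) (knodel_adj 4 28)"
    by (rule knodel_gamma_stable_by_search[where k = 6
          and D = "[(1, 2), (1, 3), (1, 4), (1, 7), (2, 1), (2, 12), (2, 13)]"])
      code_simp+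
  moreover have "gamma_stable (knodel_vertices 36) (knodel_adj 4 36)"
    by (rule knodel_gamma_stable_by_search[where k = 7
          and D = "[(1, 1), (1, 2), (1, 10), (1, 11), (2, 6), (2, 7), (2, 15), (2, 16)]"])
      code_simp+
  ultimately show ?thesis using assms by auto
qed

end
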